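(* Let $s\ge 4$ be an integer and $G\in\mathcal G^s_2$. Then $\lambda(G)\ge v(G)/(s+1)$.
   Context: All graphs are finite and simple. For integers $1\le r\le s$, $\mathcal G^s_r$ denotes the set of graphs in which every vertex has degree at least $r$ and at most $s$. $v(G)$ is the number of vertices of $G$. $\lambda(G)$ denotes the maximum number of pairwise vertex-disjoint subgraphs of $G$ each of which is a path with exactly two edges. *)

theory Defs
  imports Complex_Main
begin

definition simple_graph :: "'a set \<Rightarrow> ('a \<Rightarrow> 'a \<Rightarrow> bool) \<Rightarrow> bool" where
  "simple_graph V E \<longleftrightarrow> finite V \<and> (\<forall>u v. E u v \<longrightarrow> u \<in> V \<and> v \<in> V)
     \<and> (\<forall>u v. E u v \<longrightarrow> E v u) \<and> (\<forall>v. \<not> E v v)"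

definition degree :: "'a set \<Rightarrow> ('a \<Rightarrow> 'a \<Rightarrow> bool) \<Rightarrow> 'a \<Rightarrow> nat" where
  "degree V E v = card {u \<in> V. E v u}"

definition in_class :: "nat \<Rightarrow> nat \<Rightarrow> 'a set \<Rightarrow> ('a \<Rightarrow> 'a \<Rightarrow> bool) \<Rightarrow> bool" where
  "in_class r s V E \<longleftrightarrow> simple_graph V E \<and> (\<forall>v\<in>V. r \<le> degree V E v \<and> degree V E v \<le> s)"

definition is_P3 :: "('a \<Rightarrow> 'a \<Rightarrow> bool) \<Rightarrow> 'a \<times> 'a \<times> 'a \<Rightarrow> bool" where
  "is_P3 E p = (case p of (a, b, c) \<Rightarrow> a \<noteq> c \<and> E a b \<and> E b c)"

definition P3_verts :: "'a \<times> 'a \<times> 'a \<Rightarrow> 'a set" where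
  "P3_verts p = (case p of (a, b, c) \<Rightarrow> {a, b, c})"

definition P3_packing :: "('a \<Rightarrow> 'a \<Rightarrow> bool) \<Rightarrow> ('a \<times> 'a \<times> 'a) set \<Rightarrow> bool" where
  "P3_packing E P \<longleftrightarrow> (\<forall>p\<in>P. is_P3 E p)
     \<and> (\<forall>p\<in>P. \<forall>q\<in>P. p \<noteq> q \<longrightarrow> P3_verts p \<inter> P3_verts q = {})"

definition lambda :: "'a set \<Rightarrow> ('a \<Rightarrow> 'a \<Rightarrow> bool) \<Rightarrow> nat" where
  "lambda V E = Max {card P | P. P3_packing E P \<and> finite P}"

end

theory Submission
  imports Defs
begin

text \<open>Cover the vertex set by vertex-disjoint rooted subtrees of \<open>G\<close> of depth at most 2, each
  with at least three vertices. Every such tree contains a path with two edges, so \<open>\<lambda>(G)\<close> is at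
  least the number of trees. Covers exist: take a maximal set of vertices at pairwise distance at
  least 3 as roots; every vertex lies within distance 2 of a root, and minimum degree 2 gives
  each tree at least three vertices. Among all covers choose one minimising the total excess
  \<open>\<Sum> max 0 (|T| - (s + 1))\<close> and then the sum of depths. A tree with more than \<open>s + 1\<close>
  vertices has a leaf \<open>y\<close> at depth 2, because its root has at most \<open>s\<close> neighbours. At the
  optimum every depth-1 vertex has at most one child, and \<open>y\<close> has a neighbour \<open>z\<close> besides its
  parent; depending on where \<open>z\<close> sits, re-hanging \<open>y\<close> below \<open>z\<close> or carving a new three-vertex
  tree out of a path through \<open>y\<close> would decrease the potential. So all trees have at most
  \<open>s + 1\<close> vertices, there are at least \<open>n / (s + 1)\<close> of them, and \<open>\<lambda>(G) \<ge> n / (s + 1)\<close>.\<close>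

lemma sum_mono_except_pair:
  fixes f g :: "'b \<Rightarrow> 'c :: ordered_comm_monoid_add"
  assumes "finite A" "a \<in> A" "b \<in> A" "a \<noteq> b"
    and "\<And>x. x \<in> A \<Longrightarrow> x \<noteq> a \<Longrightarrow> x \<noteq> b \<Longrightarrow> g x \<le> f x"
    and "g a + g b \<le> f a + f b"
  shows "sum g A \<le> sum f A"
proof -
  have split: "sum h A = h a + h b + sum h (A - {a} - {b})" for h :: "'b \<Rightarrow> 'c"
    using assms(1-4) by (simp add: sum.remove[of A a] sum.remove[of "A - {a}" b] add.assoc)
  have "sum g (A - {a} - {b}) \<le> sum f (A - {a} - {b})"
    using assms(5) by (intro sum_mono) auto
  then show ?thesis
    unfolding split[of g] split[of f] using assms(6) by (rule add_mono[rotated])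
qed

locale finite_simple_graph =
  fixes V :: "'a set" and E :: "'a \<Rightarrow> 'a \<Rightarrow> bool"
  assumes finite_V: "finite V"
    and edge_in_V: "E u v \<Longrightarrow> u \<in> V \<and> v \<in> V"
    and edge_sym: "E u v \<Longrightarrow> E v u"
    and edge_irrefl: "\<not> E v v"
begin

lemma P3_packing_finite:
  assumes "P3_packing E P"
  shows "finite P"
proof (rule finite_subset)
  show "P \<subseteq> V \<times> V \<times> V"
    using assms edge_in_V by (fastforce simp: P3_packing_def is_P3_def)
  show "finite (V \<times> V \<times> V)"
    using finite_V by simp
qed

lemma card_le_lambda:
  assumes "P3_packing E P"
  shows "card P \<le> lambda V E"
proof -
  have "{card Q | Q. P3_packing E Q \<and> finite Q} \<subseteq> {..card (V \<times> V \<times> V)}"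
    using edge_in_V finite_V
    by (fastforce intro!: card_mono simp: P3_packing_def is_P3_def)
  then have "finite {card Q | Q. P3_packing E Q \<and> finite Q}"
    using finite_subset by blast
  then show ?thesis
    unfolding lambda_def using assms P3_packing_finite by (blast intro: Max_ge)
qed

lemma card_le_lambda_if_disjoint_P3s:
  assumes "finite I"
    and P3: "\<And>i. i \<in> I \<Longrightarrow> \<exists>p. is_P3 E p \<and> P3_verts p \<subseteq> A i"
    and disjoint: "\<And>i j. i \<in> I \<Longrightarrow> j \<in> I \<Longrightarrow> i \<noteq> j \<Longrightarrow> A i \<inter> A j = {}"
  shows "card I \<le> lambda V E"
proof -
  define f where "f i = (SOME p. is_P3 E p \<and> P3_verts p \<subseteq> A i)" for i
  have f: "is_P3 E (f i) \<and> P3_verts (f i) \<subseteq> A i" if "i \<in> I" for i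
    unfolding f_def using someI_ex[OF P3[OF that]] .
  have nonempty: "P3_verts p \<noteq> {}" for p :: "'a \<times> 'a \<times> 'a"
    by (cases p) (simp add: P3_verts_def)
  have "inj_on f I"
  proof (rule inj_onI, rule ccontr)
    fix i j assume "i \<in> I" "j \<in> I" "f i = f j" "i \<noteq> j"
    then show False
      using f[of i] f[of j] disjoint[of i j] nonempty[of "f i"] by auto
  qed
  moreover have "P3_packing E (f ` I)"
    unfolding P3_packing_def
  proof (intro conjI ballI impI)
    fix p assume "p \<in> f ` I"
    then show "is_P3 E p" using f by blast
  next
    fix p q assume "p \<in> f ` I" "q \<in> f ` I" "p \<noteq> q"
    then obtain i j where "i \<in> I" "j \<in> I" "i \<noteq> j" "p = f i" "q = f j" by blast
    then show "P3_verts p \<inter> P3_verts q = {}"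
      using f[of i] f[of j] disjoint[of i j] by blast
  qed
  ultimately show ?thesis
    using card_le_lambda[of "f ` I"] card_image[of f I] by simp
qed

definition root :: "('a \<Rightarrow> 'a) \<Rightarrow> ('a \<Rightarrow> nat) \<Rightarrow> 'a \<Rightarrow> 'a" where
  "root par lev v = (if lev v = 0 then v else if lev v = 1 then par v else par (par v))"

definition part :: "('a \<Rightarrow> 'a) \<Rightarrow> ('a \<Rightarrow> nat) \<Rightarrow> 'a \<Rightarrow> 'a set" where
  "part par lev r = {v \<in> V. root par lev v = r}"

definition children :: "('a \<Rightarrow> 'a) \<Rightarrow> ('a \<Rightarrow> nat) \<Rightarrow> 'a \<Rightarrow> 'a set" where
  "children par lev x = {v \<in> V. lev v \<noteq> 0 \<and> par v = x}"

definition hangs :: "('a \<Rightarrow> 'a) \<Rightarrow> ('a \<Rightarrow> nat) \<Rightarrow> 'a \<Rightarrow> bool" where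
  "hangs par lev v \<longleftrightarrow>
     lev v \<le> 2 \<and> (lev v \<noteq> 0 \<longrightarrow> par v \<in> V \<and> E v (par v) \<and> Suc (lev (par v)) = lev v)"

text \<open>\<open>par\<close> and \<open>lev\<close> encode a spanning forest: \<open>lev v\<close> is the depth of \<open>v\<close> and \<open>par v\<close> its
  parent (irrelevant at the roots); the trees are the parts of the roots.\<close>
definition tree_cover :: "('a \<Rightarrow> 'a) \<Rightarrow> ('a \<Rightarrow> nat) \<Rightarrow> bool" where
  "tree_cover par lev \<longleftrightarrow>
     (\<forall>v\<in>V. hangs par lev v) \<and> (\<forall>r\<in>V. lev r = 0 \<longrightarrow> 3 \<le> card (part par lev r))"

definition depth_sum :: "('a \<Rightarrow> nat) \<Rightarrow> nat" where
  "depth_sum lev = (\<Sum>v\<in>V. lev v)"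

lemma finite_part: "finite (part par lev r)"
  using finite_V by (simp add: part_def)

lemma finite_children: "finite (children par lev x)"
  using finite_V by (simp add: children_def)

lemma mem_part_root: "v \<in> V \<Longrightarrow> v \<in> part par lev (root par lev v)"
  by (simp add: part_def)

lemma parts_disjoint: "r \<noteq> r' \<Longrightarrow> part par lev r \<inter> part par lev r' = {}"
  by (auto simp: part_def)

lemma depth_sum_less:
  assumes "\<And>v. v \<in> V \<Longrightarrow> lev' v \<le> lev v" "y \<in> V" "lev' y < lev y"
  shows "depth_sum lev' < depth_sum lev"
  unfolding depth_sum_def using assms finite_V by (intro sum_strict_mono_ex1) auto

lemma depth_sum_shift:
  assumes "A \<subseteq> V" "B \<subseteq> V" "\<And>v. lev' v + of_bool (v \<in> A) = lev v + of_bool (v \<in> B)"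
  shows "depth_sum lev' + card A = depth_sum lev + card B"
proof -
  have "(\<Sum>v\<in>V. lev' v + of_bool (v \<in> A)) = (\<Sum>v\<in>V. lev v + of_bool (v \<in> B))"
    using assms(3) by simp
  moreover have "V \<inter> A = A" "V \<inter> B = B"
    using assms(1,2) by blast+
  ultimately show ?thesis
    using finite_V by (simp add: sum.distrib depth_sum_def Int_def)
qed

definition scattered :: "'a set \<Rightarrow> bool" where
  "scattered I \<longleftrightarrow> I \<subseteq> V \<and> (\<forall>a\<in>I. \<forall>b\<in>I. a \<noteq> b \<longrightarrow> \<not> E a b \<and> (\<forall>u. \<not> (E a u \<and> E u b)))"

lemma scattered_no_common_neighbour:
  "scattered I \<Longrightarrow> a \<in> I \<Longrightarrow> b \<in> I \<Longrightarrow> E a u \<Longrightarrow> E u b \<Longrightarrow> a = b"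
  unfolding scattered_def by blast

lemma scattered_independent: "scattered I \<Longrightarrow> a \<in> I \<Longrightarrow> b \<in> I \<Longrightarrow> \<not> E a b"
  unfolding scattered_def by (metis edge_irrefl)

lemma scattered_dominating:
  obtains I where "scattered I"
    and "\<And>v. v \<in> V - I \<Longrightarrow> (\<exists>a\<in>I. E v a) \<or> (\<exists>u. \<exists>a\<in>I. E v u \<and> E u a)"
proof -
  have "\<forall>J. scattered J \<longrightarrow> card J < Suc (card V)"
    using finite_V card_mono by (auto simp: scattered_def less_Suc_eq_le)
  then obtain I where I: "scattered I" and max: "\<And>J. scattered J \<Longrightarrow> card J \<le> card I"
    using ex_has_greatest_nat[of scattered "{}" card "Suc (card V)"] by (auto simp: scattered_def)
  have "finite I"
    using I finite_V finite_subset by (auto simp: scattered_def)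
  have "(\<exists>a\<in>I. E v a) \<or> (\<exists>u. \<exists>a\<in>I. E v u \<and> E u a)" if v: "v \<in> V - I" for v
  proof (rule ccontr)
    assume "\<not> ?thesis"
    then have "scattered (insert v I)"
      using I v edge_sym unfolding scattered_def by blast
    then show False
      using max[of "insert v I"] \<open>finite I\<close> v by simp
  qed
  then show ?thesis using that I by blast
qed

lemma Suc_degree_le_card_part:
  assumes "r \<in> V" "lev r = 0" "\<And>u. E r u \<Longrightarrow> lev u = 1 \<and> par u = r"
  shows "Suc (degree V E r) \<le> card (part par lev r)"
proof -
  have "insert r {u \<in> V. E r u} \<subseteq> part par lev r"
    using assms by (auto simp: part_def root_def)
  moreover have "card (insert r {u \<in> V. E r u}) = Suc (degree V E r)"
    using finite_V edge_irrefl by (simp add: degree_def)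
  ultimately show ?thesis
    using card_mono[OF finite_part] by metis
qed

lemma tree_cover_exists:
  assumes min_degree: "\<And>v. v \<in> V \<Longrightarrow> 2 \<le> degree V E v"
  obtains par lev where "tree_cover par lev"
proof -
  obtain I where I: "scattered I"
    and dominating: "\<And>v. v \<in> V - I \<Longrightarrow> (\<exists>a\<in>I. E v a) \<or> (\<exists>u. \<exists>a\<in>I. E v u \<and> E u a)"
    using scattered_dominating by blast
  define lev where "lev v = (if v \<in> I then 0 else if \<exists>a\<in>I. E v a then 1 else 2 :: nat)" for v
  define par where "par v = (if \<exists>a\<in>I. E v a then SOME a. a \<in> I \<and> E v a
    else SOME u. \<exists>a\<in>I. E v u \<and> E u a)" for v
  have par1: "par v \<in> I \<and> E v (par v)" if "\<exists>a\<in>I. E v a" for v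
    using that someI_ex[of "\<lambda>a. a \<in> I \<and> E v a"] by (auto simp: par_def)
  have par2: "\<exists>a\<in>I. E v (par v) \<and> E (par v) a" if "\<not> (\<exists>a\<in>I. E v a)" "v \<in> V - I" for v
    using that dominating[OF that(2)] someI_ex[of "\<lambda>u. \<exists>a\<in>I. E v u \<and> E u a"]
    by (auto simp: par_def)
  have "hangs par lev v" if v: "v \<in> V" for v
  proof -
    consider "v \<in> I" | "v \<notin> I" "\<exists>a\<in>I. E v a" | "v \<in> V - I" "\<not> (\<exists>a\<in>I. E v a)"
      using v by blast
    then show ?thesis
    proof cases
      case 2
      then show ?thesis
        using par1 I edge_in_V by (auto simp: hangs_def lev_def scattered_def)
    next
      case 3
      then show ?thesis
        using par2 edge_in_V by (fastforce simp: hangs_def lev_def)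
    qed (simp add: hangs_def lev_def)
  qed
  moreover have "3 \<le> card (part par lev r)" if "r \<in> V" "lev r = 0" for r
  proof -
    have "r \<in> I"
      using that by (simp add: lev_def split: if_splits)
    have "lev u = 1 \<and> par u = r" if "E r u" for u
    proof -
      have "u \<notin> I" "E u r"
        using scattered_independent[OF I \<open>r \<in> I\<close>] that edge_sym by blast+
      moreover have "par u \<in> I \<and> E u (par u)"
        using par1 \<open>r \<in> I\<close> \<open>E u r\<close> by blast
      then have "par u = r"
        using scattered_no_common_neighbour[OF I \<open>r \<in> I\<close>, of "par u" u] that by simp
      ultimately show ?thesis
        using \<open>r \<in> I\<close> by (auto simp: lev_def)
    qed
    then show ?thesis
      using Suc_degree_le_card_part[of r lev par] min_degree[of r] that by fastforce
  qed
  ultimately have "tree_cover par lev"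
    by (simp add: tree_cover_def)
  then show ?thesis
    using that by blast
qed

context
  fixes par lev
  assumes cover: "tree_cover par lev"
begin

lemma depth_le_2: "v \<in> V \<Longrightarrow> lev v \<le> 2"
  using cover by (simp add: tree_cover_def hangs_def)

lemma parent:
  assumes "v \<in> V" "lev v \<noteq> 0"
  shows "par v \<in> V" "E v (par v)" "Suc (lev (par v)) = lev v"
  using cover assms by (simp_all add: tree_cover_def hangs_def)

lemma card_part_ge_3: "r \<in> V \<Longrightarrow> lev r = 0 \<Longrightarrow> 3 \<le> card (part par lev r)"
  using cover by (simp add: tree_cover_def)

lemma depth_sum_le: "depth_sum lev \<le> 2 * card V"
  using sum_bounded_above[of V lev 2] depth_le_2 by (simp add: depth_sum_def mult.commute)

lemma depth_2_leaf: "v \<in> V \<Longrightarrow> lev v \<noteq> 0 \<Longrightarrow> lev (par v) \<noteq> 2"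
  using parent depth_le_2 by fastforce

lemma child: "v \<in> children par lev x \<Longrightarrow> v \<in> V \<and> E v x \<and> lev v = Suc (lev x)"
  using parent by (auto simp: children_def)

lemma root_is_root: "v \<in> V \<Longrightarrow> root par lev v \<in> V \<and> lev (root par lev v) = 0"
  using parent[of v] parent[of "par v"] depth_le_2[of v]
  by (auto simp: root_def numeral_2_eq_2)

lemma root_parent: "v \<in> V \<Longrightarrow> lev v \<noteq> 0 \<Longrightarrow> root par lev (par v) = root par lev v"
  using parent[of v] depth_le_2[of v] by (auto simp: root_def numeral_2_eq_2)

lemma part_non_root: "lev r \<noteq> 0 \<or> r \<notin> V \<Longrightarrow> part par lev r = {}"
  using root_is_root by (force simp: part_def)

lemma part_closed: "v \<in> V \<Longrightarrow> lev v \<noteq> 0 \<Longrightarrow> par v \<in> part par lev r \<Longrightarrow> v \<in> part par lev r"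
  using root_parent by (simp add: part_def)

lemma part_without_depth_2:
  assumes "lev r = 0" and "\<And>v. v \<in> part par lev r \<Longrightarrow> lev v \<noteq> 2"
  shows "part par lev r \<subseteq> insert r (children par lev r)"
proof
  fix v assume v: "v \<in> part par lev r"
  then have "v \<in> V" "lev v \<le> 2" "root par lev v = r"
    using depth_le_2 by (auto simp: part_def)
  then consider "lev v = 0" | "lev v = 1"
    using assms(2)[OF v] by linarith
  then show "v \<in> insert r (children par lev r)"
    by cases (use \<open>v \<in> V\<close> \<open>root par lev v = r\<close> in \<open>auto simp: root_def children_def\<close>)
qed

lemma part_contains_P3:
  assumes "r \<in> V" "lev r = 0"
  shows "\<exists>p. is_P3 E p \<and> P3_verts p \<subseteq> part par lev r"
proof (cases "\<exists>y \<in> part par lev r. lev y = 2")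
  case True
  then obtain y where y: "y \<in> part par lev r" "lev y = 2" by blast
  then have "y \<in> V" "root par lev y = r" by (auto simp: part_def)
  then have "par y \<in> V" "E y (par y)" "lev (par y) = 1" "par (par y) = r" "E (par y) r"
    using y parent[of y] parent[of "par y"] by (auto simp: root_def)
  then have "is_P3 E (r, par y, y)" "P3_verts (r, par y, y) \<subseteq> part par lev r"
    using y assms edge_sym by (auto simp: is_P3_def P3_verts_def part_def root_def)
  then show ?thesis by blast
next
  case False
  then have "part par lev r \<subseteq> insert r (children par lev r)"
    using part_without_depth_2 assms(2) by blast
  then have "3 \<le> card (insert r (children par lev r))"
    using card_part_ge_3[OF assms] card_mono[OF finite.insertI[OF finite_children]] le_trans
    by blast
  then have "2 \<le> card (children par lev r)"
    using finite_children by (simp add: card_insert_if split: if_splits)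
  then obtain x1 x2 where x: "x1 \<in> children par lev r" "x2 \<in> children par lev r" "x1 \<noteq> x2"
    by (metis One_nat_def card_le_Suc0_iff_eq finite_children not_less_eq_eq numeral_2_eq_2)
  have "r \<in> part par lev r"
    using assms by (simp add: part_def root_def)
  then have "x1 \<in> part par lev r" "x2 \<in> part par lev r"
    using x part_closed by (auto simp: children_def)
  moreover have "is_P3 E (x1, r, x2)"
    using x child[of x1] child[of x2] edge_sym by (simp add: is_P3_def)
  ultimately have "is_P3 E (x1, r, x2)" "P3_verts (x1, r, x2) \<subseteq> part par lev r"
    using assms by (simp_all add: P3_verts_def part_def root_def)
  then show ?thesis by blast
qed

lemma card_V_le_if_parts_le:
  assumes "\<And>r. r \<in> V \<Longrightarrow> lev r = 0 \<Longrightarrow> card (part par lev r) \<le> m"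
  shows "card V \<le> m * lambda V E"
proof -
  define R where "R = {r \<in> V. lev r = 0}"
  have "finite R" using finite_V by (simp add: R_def)
  have "V \<subseteq> (\<Union>r\<in>R. part par lev r)"
    using mem_part_root root_is_root unfolding R_def by blast
  then have "card V \<le> card (\<Union>r\<in>R. part par lev r)"
    using \<open>finite R\<close> finite_part by (intro card_mono) auto
  also have "\<dots> \<le> (\<Sum>r\<in>R. card (part par lev r))"
    by (rule card_UN_le[OF \<open>finite R\<close>])
  also have "\<dots> \<le> m * card R"
    using sum_bounded_above[of R "\<lambda>r. card (part par lev r)" m] assms
    by (auto simp: R_def mult.commute)
  also have "card R \<le> lambda V E"
    using card_le_lambda_if_disjoint_P3s[OF \<open>finite R\<close>, of "part par lev"]
      part_contains_P3 parts_disjoint unfolding R_def by blast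
  finally show ?thesis by simp
qed

context
  fixes N :: "'a set" and t :: 'a and par' :: "'a \<Rightarrow> 'a" and lev' :: "'a \<Rightarrow> nat"
  assumes N_in_V: "N \<subseteq> V"
    and unchanged: "\<And>v. v \<notin> N \<Longrightarrow> par' v = par v \<and> lev' v = lev v"
    and closed: "\<And>v. v \<in> V \<Longrightarrow> lev v \<noteq> 0 \<Longrightarrow> par v \<in> N \<Longrightarrow> v \<in> N"
    and rehung: "\<And>v. v \<in> N \<Longrightarrow> hangs par' lev' v \<and> root par' lev' v = t"
begin

lemma reassign_root: "v \<in> V \<Longrightarrow> root par' lev' v = (if v \<in> N then t else root par lev v)"
proof (cases "v \<in> N")
  case False
  assume "v \<in> V"
  have "par v \<notin> N" if "lev v = 2"
    using closed[OF \<open>v \<in> V\<close>] False that by auto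
  then show ?thesis
    using False unchanged[OF False] unchanged[of "par v"] \<open>v \<in> V\<close> depth_le_2[of v]
    by (auto simp: root_def numeral_2_eq_2)
qed (use rehung in simp)

lemma reassign_part: "part par' lev' d = part par lev d - N \<union> (if d = t then N else {})"
  using reassign_root N_in_V by (auto simp: part_def)

lemma reassign_tree_cover:
  assumes new_root: "3 \<le> card (part par lev t \<union> N)"
    and shrunk: "\<And>r. r \<in> V \<Longrightarrow> lev r = 0 \<Longrightarrow> r \<noteq> t \<Longrightarrow> r \<notin> N \<Longrightarrow>
      part par lev r \<inter> N \<noteq> {} \<Longrightarrow> 3 \<le> card (part par lev r - N)"
  shows "tree_cover par' lev'"
proof -
  have "hangs par' lev' v" if "v \<in> V" for v
  proof (cases "v \<in> N")
    case False
    have "hangs par lev v"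
      using cover \<open>v \<in> V\<close> by (simp add: tree_cover_def)
    moreover have "par v \<notin> N" if "lev v \<noteq> 0"
      using closed[OF \<open>v \<in> V\<close> that] False by blast
    ultimately show ?thesis
      using unchanged[OF False] unchanged[of "par v"] by (auto simp: hangs_def)
  qed (use rehung in blast)
  moreover have "3 \<le> card (part par' lev' r)" if r: "r \<in> V" "lev' r = 0" for r
  proof (cases "r = t")
    case True
    then show ?thesis
      using new_root by (simp add: reassign_part Un_commute)
  next
    case False
    have "r \<notin> N"
      using rehung[of r] r(2) False by (auto simp: root_def)
    then have "lev r = 0" "part par' lev' r = part par lev r - N"
      using unchanged r(2) False by (simp_all add: reassign_part)
    then show ?thesis
      using shrunk[OF r(1) _ False \<open>r \<notin> N\<close>] card_part_ge_3[OF r(1)]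
      by (cases "part par lev r \<inter> N = {}") (auto simp: Diff_triv)
  qed
  ultimately show ?thesis
    by (simp add: tree_cover_def)
qed

end

lemma reattach_leaf:
  assumes y: "y \<in> V" "lev y = 2" and z: "z \<in> V" "lev z \<le> 1" "E y z"
  defines "par' \<equiv> par(y := z)" and "lev' \<equiv> lev(y := Suc (lev z))"
  shows "part par' lev' d = part par lev d - {y} \<union> (if d = root par lev z then {y} else {})"
    and "(root par lev z \<noteq> root par lev y \<Longrightarrow> 4 \<le> card (part par lev (root par lev y)))
      \<Longrightarrow> tree_cover par' lev'"
proof -
  have "z \<noteq> y" using y z by auto
  have unchanged: "par' v = par v \<and> lev' v = lev v" if "v \<notin> {y}" for v
    using that by (simp add: par'_def lev'_def)
  have closed: "v \<in> {y}" if "v \<in> V" "lev v \<noteq> 0" "par v \<in> {y}" for v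
    using depth_2_leaf[OF that(1,2)] that(3) y(2) by simp
  have rehung: "hangs par' lev' v \<and> root par' lev' v = root par lev z" if "v \<in> {y}" for v
    using that z \<open>z \<noteq> y\<close> by (auto simp: hangs_def root_def par'_def lev'_def)
  note reassign = reassign_part[OF _ unchanged closed rehung]
    reassign_tree_cover[OF _ unchanged closed rehung]
  show "part par' lev' d = part par lev d - {y} \<union> (if d = root par lev z then {y} else {})"
    for d using reassign(1) y by simp
  have y_part: "y \<in> part par lev (root par lev y)"
    using mem_part_root y(1) by blast
  assume big_enough: "root par lev z \<noteq> root par lev y \<Longrightarrow> 4 \<le> card (part par lev (root par lev y))"
  show "tree_cover par' lev'"
  proof (rule reassign(2))
    let ?t = "root par lev z"
    have "3 \<le> card (part par lev ?t)"
      using card_part_ge_3 root_is_root[OF z(1)] by blast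
    moreover have "card (part par lev ?t) \<le> card (part par lev ?t \<union> {y})"
      by (simp add: card_insert_le finite_part)
    ultimately show "3 \<le> card (part par lev ?t \<union> {y})"
      by linarith
  next
    fix r assume r: "r \<in> V" "r \<noteq> root par lev z" "part par lev r \<inter> {y} \<noteq> {}"
    then have "r = root par lev y"
      by (auto simp: part_def)
    then show "3 \<le> card (part par lev r - {y})"
      using big_enough r(2) y_part finite_part by simp
  qed (use y(1) in simp)
qed

lemma branch_subset_part:
  assumes "x \<in> V" "lev x = 1"
  shows "insert x (children par lev x) \<subseteq> part par lev (par x)"
proof -
  have "x \<in> part par lev (par x)"
    using assms by (simp add: part_def root_def)
  then show ?thesis
    using part_closed by (auto simp: children_def)
qed

lemma split_off_branch:
  assumes x: "x \<in> V" "lev x = 1"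
  defines "N \<equiv> insert x (children par lev x)"
    and "lev' \<equiv> \<lambda>v. if v \<in> insert x (children par lev x) then lev v - 1 else lev v"
  shows "part par lev' d = part par lev d - N \<union> (if d = x then N else {})"
    and "2 \<le> card (children par lev x) \<Longrightarrow> 3 \<le> card (part par lev (par x) - N) \<Longrightarrow>
      tree_cover par lev'"
proof -
  have child_x: "v \<in> V \<and> lev v = 2 \<and> par v = x" if "v \<in> children par lev x" for v
    using child[OF that] that x(2) by (simp add: children_def)
  have "N \<subseteq> V"
    using x(1) child_x by (auto simp: N_def)
  have unchanged: "par v = par v \<and> lev' v = lev v" if "v \<notin> N" for v
    using that by (simp add: lev'_def N_def)
  have closed: "v \<in> N" if "v \<in> V" "lev v \<noteq> 0" "par v \<in> N" for v
  proof -
    have "par v \<notin> children par lev x"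
      using child_x depth_2_leaf[OF that(1,2)] by blast
    then have "par v = x"
      using that(3) by (simp add: N_def)
    then show ?thesis
      using that(1,2) by (simp add: N_def children_def)
  qed
  have "x \<notin> children par lev x"
    using child_x x(2) by force
  have rehung: "hangs par lev' v \<and> root par lev' v = x" if "v \<in> N" for v
  proof (cases "v = x")
    case False
    then have "v \<in> children par lev x"
      using that by (simp add: N_def)
    then show ?thesis
      using x child_x[of v] child[of v] \<open>x \<notin> children par lev x\<close>
      by (simp add: lev'_def hangs_def root_def)
  qed (simp add: lev'_def hangs_def root_def x(2))
  note reassign = reassign_part[OF \<open>N \<subseteq> V\<close> unchanged closed rehung]
    reassign_tree_cover[OF \<open>N \<subseteq> V\<close> unchanged closed rehung]
  show "part par lev' d = part par lev d - N \<union> (if d = x then N else {})" for d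
    by (rule reassign(1))
  assume two: "2 \<le> card (children par lev x)" and rest: "3 \<le> card (part par lev (par x) - N)"
  show "tree_cover par lev'"
  proof (rule reassign(2))
    have "part par lev x = {}"
      using part_non_root x by simp
    then show "3 \<le> card (part par lev x \<union> N)"
      using two \<open>x \<notin> children par lev x\<close> by (simp add: N_def finite_children)
  next
    fix r assume "part par lev r \<inter> N \<noteq> {}"
    then have "r = par x"
      using branch_subset_part[OF x] parts_disjoint[of r "par x"] by (auto simp: N_def)
    then show "3 \<le> card (part par lev r - N)"
      using rest by simp
  qed
qed

text \<open>Make the depth-1 vertex \<open>x\<close> the root of its tree: its old parent and its children hang
  below \<open>x\<close>, and its siblings below the old root.\<close>
lemma reroot:
  assumes x: "x \<in> V" "lev x = 1"
    and siblings: "\<And>w. w \<in> part par lev (par x) - {par x, x} - children par lev x \<Longrightarrow>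
      lev w = 1 \<and> children par lev w = {}"
  obtains par' lev' where "tree_cover par' lev'"
    and "\<And>d. part par' lev' d =
      part par lev d - part par lev (par x) \<union> (if d = x then part par lev (par x) else {})"
    and "depth_sum lev' + card (children par lev x)
      = depth_sum lev + card (part par lev (par x) - {par x, x} - children par lev x)"
proof -
  define c where "c = par x"
  define P where "P = part par lev c"
  define K where "K = children par lev x"
  define W where "W = P - {c, x} - K"
  have c: "c \<in> V" "lev c = 0" "E x c" "E c x"
    using parent[OF x(1)] x(2) edge_sym by (auto simp: c_def)
  have K: "v \<in> V \<and> lev v = 2 \<and> par v = x \<and> E v x" if "v \<in> K" for v
    using child[OF that[unfolded K_def]] that x(2) by (simp add: K_def children_def)
  have W: "w \<in> V \<and> lev w = 1 \<and> par w = c \<and> E w c" if "w \<in> W" for w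
  proof -
    have "w \<in> V" "root par lev w = c" "lev w = 1"
      using that siblings by (auto simp: W_def P_def K_def c_def part_def)
    then show ?thesis
      using parent[OF \<open>w \<in> V\<close>] by (simp add: root_def)
  qed
  have "x \<in> P" "c \<in> P"
    using x c by (simp_all add: P_def part_def root_def c_def)
  have "x \<noteq> c" "x \<notin> K" "c \<notin> K"
    using x(2) c(2) K[of x] K[of c] by auto
  have "c \<notin> W"
    by (simp add: W_def)
  have "K \<subseteq> P"
    using branch_subset_part[OF x] by (simp add: P_def K_def c_def)
  define par' where "par' v = (if v = c then x else if v \<in> W then c else par v)" for v
  define lev' where "lev' v = (if v = x then 0 else if v = c \<or> v \<in> K then 1 else if v \<in> W then 2
    else lev v)" for v
  have unchanged: "par' v = par v \<and> lev' v = lev v" if "v \<notin> P" for v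
    using that \<open>x \<in> P\<close> \<open>c \<in> P\<close> \<open>K \<subseteq> P\<close> by (auto simp: par'_def lev'_def W_def)
  have closed: "v \<in> P" if "v \<in> V" "lev v \<noteq> 0" "par v \<in> P" for v
    using part_closed[OF that(1,2), of c] that(3) by (simp add: P_def)
  have rehung: "hangs par' lev' v \<and> root par' lev' v = x" if v: "v \<in> P" for v
  proof -
    consider "v = x" | "v = c" | "v \<in> K" | "v \<in> W"
      using v by (auto simp: W_def)
    then show ?thesis
    proof cases
      case 1 then show ?thesis by (simp add: hangs_def root_def lev'_def)
    next
      case 2 then show ?thesis
        using c x \<open>x \<noteq> c\<close> \<open>c \<notin> W\<close> by (auto simp: hangs_def root_def lev'_def par'_def)
    next
      case 3 then show ?thesis
        using K x \<open>x \<notin> K\<close> \<open>c \<notin> K\<close> by (auto simp: hangs_def root_def lev'_def par'_def W_def)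
    next
      case 4 then show ?thesis
        using W c \<open>x \<noteq> c\<close> \<open>c \<notin> K\<close> by (auto simp: hangs_def root_def lev'_def par'_def W_def)
    qed
  qed
  have "P \<subseteq> V"
    by (simp add: P_def part_def)
  note reassign = reassign_part[OF \<open>P \<subseteq> V\<close> unchanged closed rehung]
    reassign_tree_cover[OF \<open>P \<subseteq> V\<close> unchanged closed rehung]
  have "tree_cover par' lev'"
  proof (rule reassign(2))
    have "card P \<le> card (part par lev x \<union> P)"
      using finite_part by (intro card_mono) (auto simp: P_def)
    then show "3 \<le> card (part par lev x \<union> P)"
      using card_part_ge_3[OF c(1,2)] by (simp add: P_def)
  next
    fix r assume "r \<notin> P" "part par lev r \<inter> P \<noteq> {}"
    then show "3 \<le> card (part par lev r - P)"
      using parts_disjoint[of r c] \<open>c \<in> P\<close> by (auto simp: P_def)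
  qed
  moreover have "depth_sum lev' + card (insert x K) = depth_sum lev + card (insert c W)"
    using K W x c \<open>x \<noteq> c\<close> \<open>x \<notin> K\<close> \<open>c \<notin> K\<close>
    by (intro depth_sum_shift) (auto simp: lev'_def W_def)
  then have "depth_sum lev' + card K = depth_sum lev + card W"
    using \<open>x \<notin> K\<close> \<open>c \<notin> W\<close> finite_children[of par lev x] finite_part[of par lev c]
    by (simp add: K_def W_def P_def)
  ultimately show ?thesis
    using that reassign(1) by (simp add: P_def K_def W_def c_def)
qed

lemma small_rest_siblings:
  assumes x: "x \<in> V" "lev x = 1"
    and small: "card (part par lev (par x) - insert x (children par lev x)) < 3"
    and w: "w \<in> part par lev (par x) - {par x, x} - children par lev x"
  shows "lev w = 1 \<and> children par lev w = {}"
proof -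
  let ?c = "par x" and ?R = "part par lev (par x) - insert x (children par lev x)"
  have "lev ?c = 0" "?c \<in> ?R"
    using parent[OF x(1)] x(2) by (auto simp: part_def root_def children_def)
  then have "card (?R - {?c}) \<le> Suc 0"
    using small finite_part by simp
  then have "\<forall>u\<in>?R - {?c}. \<forall>u'\<in>?R - {?c}. u = u'"
    using card_le_Suc0_iff_eq[of "?R - {?c}"] finite_part by blast
  moreover have "w \<in> ?R - {?c}"
    using w by blast
  ultimately have unique: "u = w" if "u \<in> ?R" "u \<noteq> ?c" for u
    using that by blast
  have "w \<in> V" "root par lev w = ?c" "w \<noteq> ?c"
    using w by (auto simp: part_def)
  then have "lev w \<noteq> 0"
    by (metis root_def)
  have "lev w \<noteq> 2"
  proof
    assume "lev w = 2"
    then have "lev (par w) = 1" "par w \<in> V"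
      using parent[OF \<open>w \<in> V\<close> \<open>lev w \<noteq> 0\<close>] by auto
    moreover have "par w \<in> part par lev ?c" "par w \<noteq> x"
      using root_parent[OF \<open>w \<in> V\<close> \<open>lev w \<noteq> 0\<close>] \<open>root par lev w = ?c\<close> \<open>par w \<in> V\<close> w
        \<open>lev w \<noteq> 0\<close> by (auto simp: part_def children_def)
    moreover have "par w \<notin> children par lev x"
      using child[of "par w" x] \<open>lev (par w) = 1\<close> x(2) by auto
    moreover have "par w \<noteq> ?c"
      using \<open>lev (par w) = 1\<close> \<open>lev ?c = 0\<close> by auto
    ultimately have "par w = w"
      using unique[of "par w"] by blast
    then show False
      using \<open>lev w = 2\<close> \<open>lev (par w) = 1\<close> by simp
  qed
  then have "lev w = 1"
    using depth_le_2[OF \<open>w \<in> V\<close>] \<open>lev w \<noteq> 0\<close> by linarith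
  moreover have "v \<notin> children par lev w" for v
  proof
    assume "v \<in> children par lev w"
    then have "v \<in> V" "lev v \<noteq> 0" "par v = w" "lev v = Suc (lev w)"
      using child[of v w] unfolding children_def by blast+
    moreover have "w \<in> part par lev ?c" "w \<noteq> x"
      using w by auto
    ultimately have "v \<in> part par lev ?c" "v \<noteq> x" "v \<notin> children par lev x"
      using part_closed[of v ?c] \<open>lev w = 1\<close> x(2) by (auto simp: children_def)
    moreover have "v \<noteq> ?c"
      using \<open>lev v \<noteq> 0\<close> \<open>lev ?c = 0\<close> by auto
    ultimately have "v = w"
      using unique[of v] by blast
    then show False
      using \<open>lev v = Suc (lev w)\<close> by simp
  qed
  ultimately show ?thesis
    by blast
qed

lemma carve_path:
  assumes "a \<in> V" "m \<in> V" "b \<in> V" "E a m" "E b m" "a \<noteq> b" "lev m \<noteq> 0"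
    and closed: "\<And>v. v \<in> V \<Longrightarrow> lev v \<noteq> 0 \<Longrightarrow> par v \<in> {a, m, b} \<Longrightarrow> v \<in> {a, m, b}"
    and rest: "\<And>v. v \<in> {a, m, b} \<Longrightarrow> 3 \<le> card (part par lev (root par lev v) - {a, m, b})"
  obtains par' lev' where "tree_cover par' lev'"
    and "\<And>d. part par' lev' d = part par lev d - {a, m, b} \<union> (if d = m then {a, m, b} else {})"
proof -
  define N where "N = {a, m, b}"
  define par' where "par' = par(a := m, b := m)"
  define lev' where "lev' = lev(m := 0, a := 1, b := 1)"
  have "a \<noteq> m" "b \<noteq> m"
    using assms(4,5) edge_irrefl by auto
  have "N \<subseteq> V"
    using assms(1-3) by (simp add: N_def)
  have unchanged: "par' v = par v \<and> lev' v = lev v" if "v \<notin> N" for v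
    using that by (simp add: N_def par'_def lev'_def)
  have rehung: "hangs par' lev' v \<and> root par' lev' v = m" if "v \<in> N" for v
    using that assms(1-5) \<open>a \<noteq> m\<close> \<open>b \<noteq> m\<close>
    by (auto simp: N_def par'_def lev'_def hangs_def root_def)
  note reassign = reassign_part[OF \<open>N \<subseteq> V\<close> unchanged closed[folded N_def] rehung]
    reassign_tree_cover[OF \<open>N \<subseteq> V\<close> unchanged closed[folded N_def] rehung]
  have "tree_cover par' lev'"
  proof (rule reassign(2))
    have "card N = 3"
      using \<open>a \<noteq> m\<close> \<open>b \<noteq> m\<close> assms(6) by (simp add: N_def)
    moreover have "card N \<le> card (part par lev m \<union> N)"
      using finite_part by (intro card_mono) (auto simp: N_def)
    ultimately show "3 \<le> card (part par lev m \<union> N)"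
      by simp
  next
    fix r assume "part par lev r \<inter> N \<noteq> {}"
    then obtain v where "v \<in> N" "root par lev v = r"
      by (auto simp: part_def)
    then show "3 \<le> card (part par lev r - N)"
      using rest by (auto simp: N_def)
  qed
  then show ?thesis
    using that reassign(1) by (simp add: N_def)
qed

end

end

locale bounded_degree_graph = finite_simple_graph +
  fixes s :: nat
  assumes min_degree: "v \<in> V \<Longrightarrow> 2 \<le> degree V E v"
    and max_degree: "v \<in> V \<Longrightarrow> degree V E v \<le> s"
    and s_ge_4: "4 \<le> s"
begin

text \<open>Truncated subtraction: only parts with more than \<open>s + 1\<close> vertices contribute.\<close>
definition excess :: "('a \<Rightarrow> 'a) \<Rightarrow> ('a \<Rightarrow> nat) \<Rightarrow> nat" where
  "excess par lev = (\<Sum>r\<in>V. card (part par lev r) - Suc s)"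

text \<open>The depth sum of a tree cover is at most \<open>2 |V|\<close>, so potentials compare covers
  lexicographically by excess first and depth sum second.\<close>
definition potential :: "('a \<Rightarrow> 'a) \<Rightarrow> ('a \<Rightarrow> nat) \<Rightarrow> nat" where
  "potential par lev = (2 * card V + 1) * excess par lev + depth_sum lev"

definition optimal :: "('a \<Rightarrow> 'a) \<Rightarrow> ('a \<Rightarrow> nat) \<Rightarrow> bool" where
  "optimal par lev \<longleftrightarrow> tree_cover par lev \<and>
     (\<forall>par' lev'. tree_cover par' lev' \<longrightarrow> potential par lev \<le> potential par' lev')"

lemma optimal_exists: obtains par lev where "optimal par lev"
proof -
  define P where "P k \<longleftrightarrow> (\<exists>par lev. tree_cover par lev \<and> potential par lev = k)" for k
  obtain par0 lev0 where "tree_cover par0 lev0"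
    using tree_cover_exists min_degree by blast
  then have "P (Least P)"
    using LeastI_ex[of P] by (auto simp: P_def)
  then obtain par lev where "tree_cover par lev" "potential par lev = Least P"
    by (auto simp: P_def)
  moreover have "Least P \<le> potential par' lev'" if "tree_cover par' lev'" for par' lev'
    using Least_le[of P "potential par' lev'"] that unfolding P_def by blast
  ultimately have "optimal par lev"
    by (simp add: optimal_def)
  then show ?thesis
    using that by blast
qed

lemma not_optimal_by_excess:
  assumes "tree_cover par' lev'" "excess par' lev' < excess par lev"
  shows "\<not> optimal par lev"
proof -
  have "(2 * card V + 1) * (excess par' lev' + 1) \<le> (2 * card V + 1) * excess par lev"
    using assms(2) by (intro mult_le_mono2) simp
  then have "potential par' lev' < potential par lev"
    using depth_sum_le[OF assms(1)] by (simp add: potential_def algebra_simps)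
  then show ?thesis
    using assms(1) by (auto simp: optimal_def not_le)
qed

lemma not_optimal_by_depth:
  assumes "tree_cover par' lev'" "excess par' lev' \<le> excess par lev"
    and "depth_sum lev' < depth_sum lev"
  shows "\<not> optimal par lev"
proof -
  have "potential par' lev' < potential par lev"
    unfolding potential_def using assms(2,3) by (intro add_le_less_mono mult_le_mono2)
  then show ?thesis
    using assms(1) by (auto simp: optimal_def not_le)
qed

lemma excess_le:
  assumes "a \<in> V" "b \<in> V" "a \<noteq> b"
    and "\<And>r. r \<in> V \<Longrightarrow> r \<noteq> a \<Longrightarrow> r \<noteq> b \<Longrightarrow> part par' lev' r \<subseteq> part par lev r"
    and "card (part par' lev' a) - Suc s + (card (part par' lev' b) - Suc s)
      \<le> card (part par lev a) - Suc s + (card (part par lev b) - Suc s)"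
  shows "excess par' lev' \<le> excess par lev"
  unfolding excess_def
proof (rule sum_mono_except_pair[OF finite_V assms(1-3) _ assms(5)])
  fix r assume "r \<in> V" "r \<noteq> a" "r \<noteq> b"
  then show "card (part par' lev' r) - Suc s \<le> card (part par lev r) - Suc s"
    using assms(4) card_mono[OF finite_part] diff_le_mono by metis
qed

lemma excess_less:
  assumes "\<And>r. r \<in> V \<Longrightarrow> r \<noteq> t \<Longrightarrow> part par' lev' r \<subseteq> part par lev r"
    and "card (part par' lev' t) \<le> Suc s"
    and "c \<in> V" "c \<noteq> t" "part par' lev' c \<subset> part par lev c" "Suc s < card (part par lev c)"
  shows "excess par' lev' < excess par lev"
  unfolding excess_def
proof (rule sum_strict_mono_ex1[OF finite_V])
  show "\<forall>r\<in>V. card (part par' lev' r) - Suc s \<le> card (part par lev r) - Suc s"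
    using assms(1,2) card_mono[OF finite_part] diff_le_mono by (metis diff_is_0_eq' le0)
  have "card (part par' lev' c) < card (part par lev c)"
    using psubset_card_mono[OF finite_part assms(5)] .
  then show "\<exists>r\<in>V. card (part par' lev' r) - Suc s < card (part par lev r) - Suc s"
    using assms(3,6) by (intro bexI[of _ c]) auto
qed

lemma card_Diff_triple_ge_3:
  assumes "Suc s < card A"
  shows "3 \<le> card (A - {a, b, c})"
proof -
  have "card {a, b, c} \<le> 3"
    by (simp add: card_insert_if)
  then show ?thesis
    using diff_card_le_card_Diff[of "{a, b, c}" A] assms s_ge_4 by simp
qed

context
  fixes par lev
  assumes opt: "optimal par lev"
begin

lemma optimal_cover: "tree_cover par lev"
  using opt by (simp add: optimal_def)

lemma oversized_leaf_no_root_neighbour: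
  assumes y: "y \<in> V" "lev y = 2" and big: "Suc s < card (part par lev (root par lev y))"
    and z: "z \<in> V" "E y z"
  shows "lev z \<noteq> 0"
proof
  assume "lev z = 0"
  let ?r = "root par lev y" and ?par' = "par(y := z)" and ?lev' = "lev(y := Suc (lev z))"
  have r: "?r \<in> V" "?r \<noteq> y"
    using root_is_root[OF optimal_cover y(1)] y(2) by auto
  have "root par lev z = z"
    using \<open>lev z = 0\<close> by (simp add: root_def)
  have y_part: "y \<in> part par lev ?r"
    using mem_part_root y(1) by blast
  note moved = reattach_leaf[OF optimal_cover y z(1) _ z(2)]
  have part': "part ?par' ?lev' d = part par lev d - {y} \<union> (if d = z then {y} else {})" for d
    using moved(1) \<open>root par lev z = z\<close> \<open>lev z = 0\<close> by simp
  have "tree_cover ?par' ?lev'"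
    using moved(2) \<open>lev z = 0\<close> big s_ge_4 by simp
  moreover have "excess ?par' ?lev' \<le> excess par lev"
  proof (cases "z = ?r")
    case True
    have "y \<notin> part par lev d" if "d \<noteq> ?r" for d
      using that by (simp add: part_def)
    then have "part ?par' ?lev' d = part par lev d" for d
      using part'[of d] y_part True by (cases "d = ?r") auto
    then show ?thesis by (simp add: excess_def)
  next
    case False
    have "y \<notin> part par lev z"
      using y_part parts_disjoint False by blast
    then have "card (part ?par' ?lev' z) = Suc (card (part par lev z))"
      using part'[of z] finite_part by simp
    moreover have "card (part ?par' ?lev' ?r) = card (part par lev ?r) - 1"
      using part'[of ?r] False y_part finite_part by simp
    ultimately show ?thesis
      using part' big by (intro excess_le[OF r(1) z(1) False[symmetric]]) auto
  qed
  moreover have "depth_sum ?lev' < depth_sum lev"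
    using y \<open>lev z = 0\<close> by (intro depth_sum_less) auto
  ultimately show False
    using not_optimal_by_depth opt by blast
qed

lemma oversized_leaf_depth_1_neighbour:
  assumes y: "y \<in> V" "lev y = 2" and big: "Suc s < card (part par lev (root par lev y))"
    and z: "z \<in> V" "lev z = 1" "E y z" and other: "root par lev z \<noteq> root par lev y"
  shows "Suc s \<le> card (part par lev (root par lev z))"
proof (rule ccontr)
  assume small: "\<not> ?thesis"
  let ?r = "root par lev y" and ?w = "root par lev z"
    and ?par' = "par(y := z)" and ?lev' = "lev(y := Suc (lev z))"
  have r: "?r \<in> V"
    using root_is_root[OF optimal_cover y(1)] by auto
  have y_part: "y \<in> part par lev ?r"
    using mem_part_root y(1) by blast
  note moved = reattach_leaf[OF optimal_cover y z(1) _ z(3)]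
  have part': "part ?par' ?lev' d = part par lev d - {y} \<union> (if d = ?w then {y} else {})" for d
    using moved(1) z(2) by simp
  have "tree_cover ?par' ?lev'"
    using moved(2) z(2) big s_ge_4 by simp
  moreover have "excess ?par' ?lev' < excess par lev"
  proof (rule excess_less[OF _ _ r other[symmetric] _ big])
    show "part ?par' ?lev' d \<subseteq> part par lev d" if "d \<noteq> ?w" for d
      using part' that by auto
    show "card (part ?par' ?lev' ?w) \<le> Suc s"
      using part'[of ?w] small finite_part card_insert_le_m1 by (simp add: card_insert_if)
    show "part ?par' ?lev' ?r \<subset> part par lev ?r"
      using part'[of ?r] other y_part by auto
  qed
  ultimately show False
    using not_optimal_by_excess opt by blast
qed

lemma rest_of_part_small:
  assumes x: "x \<in> V" "lev x = 1" and two: "2 \<le> card (children par lev x)"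
  shows "card (part par lev (par x) - insert x (children par lev x)) < 3"
proof (rule ccontr)
  assume rest: "\<not> ?thesis"
  define N where "N = insert x (children par lev x)"
  define lev' where "lev' = (\<lambda>v. if v \<in> insert x (children par lev x) then lev v - 1 else lev v)"
  note split = split_off_branch[OF optimal_cover x, folded lev'_def N_def]
  have cover': "tree_cover par lev'"
    using split(2) two rest by (simp add: N_def)
  let ?c = "par x"
  have c: "?c \<in> V" "?c \<noteq> x"
    using parent[OF optimal_cover x(1)] x(2) by auto
  have "N \<subseteq> part par lev ?c"
    using branch_subset_part[OF optimal_cover x] by (simp add: N_def)
  then have "card (part par lev ?c) = card (part par lev ?c - N) + card N"
    using finite_part card_Diff_subset[of N "part par lev ?c"] card_mono[of "part par lev ?c" N]
    by (simp add: finite_subset)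
  moreover have "part par lev x = {}"
    using part_non_root[OF optimal_cover] x by simp
  ultimately have "excess par lev' \<le> excess par lev"
    using split(1) c(2) by (intro excess_le[OF c(1) x(1) c(2)]) auto
  moreover have "depth_sum lev' < depth_sum lev"
    using x by (intro depth_sum_less[of lev' lev x]) (auto simp: lev'_def)
  ultimately show False
    using not_optimal_by_depth[OF cover'] opt by blast
qed

lemma card_children_le_siblings:
  assumes x: "x \<in> V" "lev x = 1"
    and siblings: "\<And>w. w \<in> part par lev (par x) - {par x, x} - children par lev x \<Longrightarrow>
      lev w = 1 \<and> children par lev w = {}"
  shows "card (children par lev x) \<le> card (part par lev (par x) - {par x, x} - children par lev x)"
proof (rule ccontr)
  assume more: "\<not> ?thesis"
  let ?P = "part par lev (par x)"
  obtain par' lev' where cover': "tree_cover par' lev'"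
    and part': "\<And>d. part par' lev' d = part par lev d - ?P \<union> (if d = x then ?P else {})"
    and depth: "depth_sum lev' + card (children par lev x)
      = depth_sum lev + card (?P - {par x, x} - children par lev x)"
    using reroot[OF optimal_cover x siblings] by blast
  have c: "par x \<in> V" "par x \<noteq> x"
    using parent[OF optimal_cover x(1)] x(2) by auto
  have "part par lev x = {}"
    using part_non_root[OF optimal_cover] x by simp
  then have "excess par' lev' \<le> excess par lev"
    using part' c(2) by (intro excess_le[OF c(1) x(1) c(2)]) auto
  moreover have "depth_sum lev' < depth_sum lev"
    using depth more by linarith
  ultimately show False
    using not_optimal_by_depth[OF cover'] opt by blast
qed

lemma at_most_one_child:
  assumes x: "x \<in> V" "lev x = 1"
  shows "card (children par lev x) \<le> 1"
proof (rule ccontr)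
  assume "\<not> ?thesis"
  then have two: "2 \<le> card (children par lev x)"
    by simp
  let ?R = "part par lev (par x) - insert x (children par lev x)"
  have small: "card ?R < 3"
    using rest_of_part_small[OF x two] .
  have siblings: "part par lev (par x) - {par x, x} - children par lev x = ?R - {par x}"
    by auto
  have "par x \<in> ?R"
    using parent[OF optimal_cover x(1)] x(2) by (auto simp: part_def root_def children_def)
  then have "card (?R - {par x}) \<le> 1"
    using small finite_part by (simp add: card_Diff_singleton)
  moreover have "card (children par lev x) \<le> card (?R - {par x})"
    using card_children_le_siblings[OF x] small_rest_siblings[OF optimal_cover x small]
    unfolding siblings by blast
  ultimately show False
    using two by linarith
qed

lemma card_part_ge_4:
  assumes z: "z \<in> V" "lev z = 2"
  shows "4 \<le> card (part par lev (root par lev z))"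
proof (rule ccontr)
  assume small: "\<not> ?thesis"
  let ?x = "par z"
  let ?c = "par ?x"
  have x: "?x \<in> V" "lev ?x = 1" "z \<in> children par lev ?x"
    using parent[OF optimal_cover z(1)] z by (auto simp: children_def)
  have c: "?c \<in> V" "lev ?c = 0"
    using parent[OF optimal_cover x(1)] x(2) by auto
  have "root par lev z = ?c"
    using z by (simp add: root_def)
  have sub: "{?c, ?x, z} \<subseteq> part par lev ?c"
    using c x z by (auto simp: part_def root_def)
  have "?c \<noteq> ?x" "?c \<noteq> z" "?x \<noteq> z"
    using c(2) x(2) z(2) by auto
  then have "card {?c, ?x, z} = 3"
    by simp
  then have "part par lev ?c = {?c, ?x, z}"
    using card_subset_eq[OF finite_part sub] card_mono[OF finite_part sub] small
      \<open>root par lev z = ?c\<close> by simp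
  then have no_siblings: "part par lev ?c - {?c, ?x} - children par lev ?x = {}"
    using x(3) by auto
  have "card (children par lev ?x) = 0"
    using card_children_le_siblings[OF x(1,2)] unfolding no_siblings by simp
  then show False
    using x(3) finite_children by auto
qed

lemma carve_path_not_oversized:
  assumes "a \<in> V" "m \<in> V" "b \<in> V" "E a m" "E b m" "a \<noteq> b" "lev m \<noteq> 0"
    and closed: "\<And>v. v \<in> V \<Longrightarrow> lev v \<noteq> 0 \<Longrightarrow> par v \<in> {a, m, b} \<Longrightarrow> v \<in> {a, m, b}"
    and rest: "\<And>v. v \<in> {a, m, b} \<Longrightarrow> 3 \<le> card (part par lev (root par lev v) - {a, m, b})"
  shows "card (part par lev (root par lev a)) \<le> Suc s"
proof (rule ccontr)
  assume big: "\<not> ?thesis"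
  obtain par' lev' where cover': "tree_cover par' lev'"
    and part': "\<And>d. part par' lev' d =
      part par lev d - {a, m, b} \<union> (if d = m then {a, m, b} else {})"
    using carve_path[OF optimal_cover assms] by blast
  let ?c = "root par lev a"
  have c: "?c \<in> V" "?c \<noteq> m"
    using root_is_root[OF optimal_cover \<open>a \<in> V\<close>] \<open>lev m \<noteq> 0\<close> by auto
  have "part par lev m = {}"
    using part_non_root[OF optimal_cover] \<open>lev m \<noteq> 0\<close> by simp
  have "excess par' lev' < excess par lev"
  proof (rule excess_less[OF _ _ c])
    show "part par' lev' r \<subseteq> part par lev r" if "r \<noteq> m" for r
      using part' that by auto
    show "card (part par' lev' m) \<le> Suc s"
      using part' \<open>part par lev m = {}\<close> s_ge_4 card_insert_le_m1 by (simp add: card_insert_if)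
    show "part par' lev' ?c \<subset> part par lev ?c"
      using part'[of ?c] c(2) mem_part_root[OF \<open>a \<in> V\<close>] by auto
  qed (use big in simp)
  then show False
    using not_optimal_by_excess[OF cover'] opt by blast
qed

lemma only_child:
  assumes "y \<in> children par lev x" "lev x = 1" "x \<in> V"
  shows "children par lev x = {y}"
proof -
  have "\<forall>a\<in>children par lev x. \<forall>b\<in>children par lev x. a = b"
    using at_most_one_child[OF assms(3,2)] card_le_Suc0_iff_eq[OF finite_children] by simp
  then show ?thesis
    using assms(1) by blast
qed

lemma oversized_leaf_neighbour_has_child:
  assumes y: "y \<in> V" "lev y = 2" and big: "Suc s < card (part par lev (root par lev y))"
    and z: "z \<in> V" "E y z" "z \<noteq> par y"
  shows "children par lev z \<noteq> {}"
proof
  assume childless: "children par lev z = {}"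
  let ?x = "par y" and ?c = "root par lev y" and ?w = "root par lev z"
  have x: "?x \<in> V" "lev ?x = 1" "E ?x y" "y \<in> children par lev ?x"
    using parent[OF optimal_cover y(1)] y edge_sym by (auto simp: children_def)
  have "root par lev ?x = ?c" "lev z \<noteq> 0"
    using root_parent[OF optimal_cover y(1)] oversized_leaf_no_root_neighbour[OF y big z(1,2)] y(2)
    by auto
  have closed: "v \<in> {?x, y, z}" if "v \<in> V" "lev v \<noteq> 0" "par v \<in> {?x, y, z}" for v
  proof -
    have "v \<in> children par lev (par v)" "par v \<noteq> y"
      using that(1,2) depth_2_leaf[OF optimal_cover that(1,2)] y(2) by (auto simp: children_def)
    then show ?thesis
      using that(3) only_child[OF x(4) x(2,1)] childless by auto
  qed
  have rest_z: "3 \<le> card (part par lev ?w - {?x, y, z})"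
  proof (cases "?w = ?c")
    case False
    have "4 \<le> card (part par lev ?w)"
    proof (cases "lev z = 1")
      case True
      then show ?thesis
        using oversized_leaf_depth_1_neighbour[OF y big z(1) True z(2) False] s_ge_4 by simp
    next
      case False
      then show ?thesis
        using card_part_ge_4[OF z(1)] depth_le_2[OF optimal_cover z(1)] \<open>lev z \<noteq> 0\<close> by simp
    qed
    moreover have "part par lev ?w - {?x, y, z} = part par lev ?w - {z}"
      using False \<open>root par lev ?x = ?c\<close> by (auto simp: part_def)
    ultimately show ?thesis
      using mem_part_root[OF z(1)] finite_part by simp
  qed (use card_Diff_triple_ge_3[OF big] in simp)
  have rest: "3 \<le> card (part par lev (root par lev v) - {?x, y, z})" if "v \<in> {?x, y, z}" for v
    using that rest_z card_Diff_triple_ge_3[OF big] \<open>root par lev ?x = ?c\<close> by auto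
  have "?x \<noteq> z" "lev y \<noteq> 0"
    using z(3) y(2) by auto
  \<comment> \<open>the path \<open>par y - y - z\<close> becomes a new tree rooted at \<open>y\<close>\<close>
  then have "card (part par lev (root par lev ?x)) \<le> Suc s"
    using carve_path_not_oversized[OF x(1) y(1) z(1) x(3) edge_sym[OF z(2)] _ _ closed rest]
    by blast
  then show False
    using big \<open>root par lev ?x = ?c\<close> by simp
qed

lemma oversized_leaf_neighbour_childless:
  assumes y: "y \<in> V" "lev y = 2" and big: "Suc s < card (part par lev (root par lev y))"
    and z: "z \<in> V" "E y z" "z \<noteq> par y"
  shows "children par lev z = {}"
proof (rule ccontr)
  assume "children par lev z \<noteq> {}"
  then obtain y' where y': "y' \<in> children par lev z"
    by blast
  let ?c = "root par lev y" and ?w = "root par lev z"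
  have "lev z \<noteq> 0"
    using oversized_leaf_no_root_neighbour[OF y big z(1,2)] .
  have "y' \<in> V" "E y' z" "lev y' = Suc (lev z)" "par y' = z"
    using child[OF optimal_cover y'] y' by (auto simp: children_def)
  then have "lev z = 1" "lev y' = 2"
    using depth_le_2[OF optimal_cover \<open>y' \<in> V\<close>] \<open>lev z \<noteq> 0\<close> by auto
  have "y' \<noteq> y" "z \<noteq> y'"
    using \<open>par y' = z\<close> z(3) \<open>lev z = 1\<close> \<open>lev y' = 2\<close> by auto
  have closed: "v \<in> {y, z, y'}" if "v \<in> V" "lev v \<noteq> 0" "par v \<in> {y, z, y'}" for v
  proof -
    have "v \<in> children par lev (par v)" "par v \<noteq> y" "par v \<noteq> y'"
      using that(1,2) depth_2_leaf[OF optimal_cover that(1,2)] y(2) \<open>lev y' = 2\<close>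
      by (auto simp: children_def)
    then show ?thesis
      using that(3) only_child[OF y' \<open>lev z = 1\<close> z(1)] by auto
  qed
  have "root par lev y' = ?w"
    using root_parent[OF optimal_cover \<open>y' \<in> V\<close>] \<open>par y' = z\<close> \<open>lev y' = 2\<close> by simp
  have rest_z: "3 \<le> card (part par lev ?w - {y, z, y'})"
  proof (cases "?w = ?c")
    case False
    have "part par lev ?w - {y, z, y'} = part par lev ?w - {z, y'}"
      using False by (auto simp: part_def)
    moreover have "card (part par lev ?w) - 2 \<le> card (part par lev ?w - {z, y'})"
      using diff_card_le_card_Diff[of "{z, y'}" "part par lev ?w"] \<open>z \<noteq> y'\<close> by simp
    ultimately show ?thesis
      using oversized_leaf_depth_1_neighbour[OF y big z(1) \<open>lev z = 1\<close> z(2) False] s_ge_4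
      by simp
  qed (use card_Diff_triple_ge_3[OF big] in simp)
  have rest: "3 \<le> card (part par lev (root par lev v) - {y, z, y'})" if "v \<in> {y, z, y'}" for v
    using that rest_z card_Diff_triple_ge_3[OF big] \<open>root par lev y' = ?w\<close> by auto
  \<comment> \<open>the path \<open>y - z - y'\<close> becomes a new tree rooted at \<open>z\<close>\<close>
  have "card (part par lev ?c) \<le> Suc s"
    using carve_path_not_oversized[OF y(1) z(1) \<open>y' \<in> V\<close> z(2) \<open>E y' z\<close> _ \<open>lev z \<noteq> 0\<close>]
      closed rest \<open>y' \<noteq> y\<close> by blast
  then show False
    using big by simp
qed

lemma card_part_le:
  assumes r: "r \<in> V" "lev r = 0"
  shows "card (part par lev r) \<le> Suc s"
proof (rule ccontr)
  assume big: "\<not> ?thesis"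
  obtain y where y: "y \<in> part par lev r" "lev y = 2"
  proof (rule ccontr)
    assume "\<not> thesis"
    then have "part par lev r \<subseteq> insert r (children par lev r)"
      using part_without_depth_2[OF optimal_cover r(2)] that by blast
    moreover have "children par lev r \<subseteq> {u \<in> V. E r u}"
      using child[OF optimal_cover] edge_sym by blast
    ultimately have "part par lev r \<subseteq> insert r {u \<in> V. E r u}"
      by blast
    then have "card (part par lev r) \<le> card (insert r {u \<in> V. E r u})"
      using finite_V by (intro card_mono) auto
    also have "\<dots> \<le> Suc (degree V E r)"
      using finite_V by (simp add: degree_def card_insert_if)
    finally have "card (part par lev r) \<le> Suc (degree V E r)" .
    then show False
      using big max_degree[OF r(1)] by simp
  qed
  then have "y \<in> V" "root par lev y = r"
    by (auto simp: part_def)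
  have "2 \<le> card {u \<in> V. E y u}"
    using min_degree[OF \<open>y \<in> V\<close>] by (simp add: degree_def)
  moreover have "card {u \<in> V. E y u} \<le> card {par y}" if "{u \<in> V. E y u} \<subseteq> {par y}"
    using card_mono[OF _ that] by simp
  ultimately have "\<not> {u \<in> V. E y u} \<subseteq> {par y}"
    by auto
  then obtain z where z: "z \<in> V" "E y z" "z \<noteq> par y"
    by blast
  moreover have "Suc s < card (part par lev (root par lev y))"
    using big \<open>root par lev y = r\<close> by simp
  ultimately show False
    using oversized_leaf_neighbour_has_child oversized_leaf_neighbour_childless \<open>y \<in> V\<close> y(2)
    by blast
qed

end

lemma card_V_le_lambda: "card V \<le> Suc s * lambda V E"
proof -
  obtain par lev where opt: "optimal par lev"
    using optimal_exists by blast
  show ?thesis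
    using card_V_le_if_parts_le[OF optimal_cover[OF opt]] card_part_le[OF opt] by blast
qed

end

theorem theorem1p7:
  fixes V :: "'a set" and E :: "'a \<Rightarrow> 'a \<Rightarrow> bool" and s :: nat
  assumes "s \<ge> 4" and "in_class 2 s V E"
  shows "real (lambda V E) \<ge> real (card V) / real (s + 1)"
proof -
  interpret bounded_degree_graph V E s
    using assms by unfold_locales (auto simp: in_class_def simple_graph_def)
  have "real (card V) \<le> real (s + 1) * real (lambda V E)"
    using card_V_le_lambda by (metis Suc_eq_plus1 of_nat_le_iff of_nat_mult)
  then show ?thesis
    by (simp add: divide_le_eq mult.commute)
qed

end
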